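(* For every cocycle $A=(A_1,\dots,A_k)\in\mathrm{SL}_2(\mathbb{R})^k$ the following dichotomy holds: $A$ is diagonalizable, or else $A$ or $A^{-1}$ is quasi-irreducible.
   Context: $\mathrm{SL}_2(\mathbb{R})$ denotes real $2\times2$ matrices with determinant $\pm1$. Let $p=(p_1,\dots,p_k)$ be a probability vector with positive entries, $X=\Sigma^{\mathbb{Z}}$ ($\Sigma=\{1,\dots,k\}$) with $\mathbb{P}=p^{\mathbb{Z}}$ and shift $T$; a cocycle $A$ acts by $A(x)=A_{x_0}$ with iterates $A^{(n)}(x)=A_{x_{n-1}}\cdots A_{x_0}$, and $L(A)\ge0$ is the a.s. limit of $\frac1n\log\|A^{(n)}(x)\|$. The inverse cocycle is $A^{-1}=(A_1^{-1},\dots,A_k^{-1})$ (its iterates are $A^{(n)}(T^{-n}x)^{-1}$), and $L(A^{-1})=L(A)$. If a line $\ell\subset\mathbb{R}^2$ is invariant under all $A_j$, write $A_jv=\lambda_jv$ for $v\in\ell$ and set $L(A|_\ell)=\sum_jp_j\log|\lambda_j|$. $A$ is quasi-irreducible if there is no line $\ell$ invariant under all $A_j$ with $L(A|_\ell)<L(A)$. $A$ is diagonalizable if there exist two transversal lines each invariant under all $A_j$. *)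

theory Defs
  imports "HOL-Analysis.Analysis" "HOL-Probability.Probability"
begin

type_synonym mat2 = "real^2^2"

text \<open>Alphabet \<Sigma> = {1..k}; a cocycle is A :: nat \<Rightarrow> mat2, used on {1..k};
  a probability vector is p :: nat \<Rightarrow> real, used on {1..k}.\<close>

definition prob_vec :: "nat \<Rightarrow> (nat \<Rightarrow> real) \<Rightarrow> bool" where
  "prob_vec k p \<longleftrightarrow> (\<forall>j\<in>{1..k}. p j > 0) \<and> (\<Sum>j=1..k. p j) = 1"

definition SL2pm :: "mat2 \<Rightarrow> bool" where
  "SL2pm M \<longleftrightarrow> det M = 1 \<or> det M = -1"

definition letter_pmf :: "nat \<Rightarrow> (nat \<Rightarrow> real) \<Rightarrow> nat pmf" where
  "letter_pmf k p = embed_pmf (\<lambda>j. if j \<in> {1..k} then p j else 0)"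

definition bernoulli_shift_measure :: "nat \<Rightarrow> (nat \<Rightarrow> real) \<Rightarrow> (int \<Rightarrow> nat) measure" where
  "bernoulli_shift_measure k p = PiM (UNIV :: int set) (\<lambda>_. measure_pmf (letter_pmf k p))"

fun cocycle_iter :: "(nat \<Rightarrow> mat2) \<Rightarrow> (int \<Rightarrow> nat) \<Rightarrow> nat \<Rightarrow> mat2" where
  "cocycle_iter A x 0 = mat 1"
| "cocycle_iter A x (Suc n) = A (x (int n)) ** cocycle_iter A x n"

definition opnorm :: "mat2 \<Rightarrow> real" where
  "opnorm M = onorm (\<lambda>v. M *v v)"

definition lyap :: "nat \<Rightarrow> (nat \<Rightarrow> real) \<Rightarrow> (nat \<Rightarrow> mat2) \<Rightarrow> real" where
  "lyap k p A = (THE c. AE x in bernoulli_shift_measure k p.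
      (\<lambda>n. ln (opnorm (cocycle_iter A x n)) / real n) \<longlonglongrightarrow> c)"

definition inv_cocycle :: "(nat \<Rightarrow> mat2) \<Rightarrow> nat \<Rightarrow> mat2" where
  "inv_cocycle A = (\<lambda>j. matrix_inv (A j))"

definition is_line :: "(real^2) set \<Rightarrow> bool" where
  "is_line l \<longleftrightarrow> subspace l \<and> dim l = 1"

definition inv_line :: "nat \<Rightarrow> (nat \<Rightarrow> mat2) \<Rightarrow> (real^2) set \<Rightarrow> bool" where
  "inv_line k A l \<longleftrightarrow> is_line l \<and> (\<forall>j\<in>{1..k}. (\<lambda>v. A j *v v) ` l \<subseteq> l)"

definition line_eig :: "mat2 \<Rightarrow> (real^2) set \<Rightarrow> real" where
  "line_eig M l = (SOME c. \<forall>v\<in>l. M *v v = c *s v)"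

definition lyap_line :: "nat \<Rightarrow> (nat \<Rightarrow> real) \<Rightarrow> (nat \<Rightarrow> mat2) \<Rightarrow> (real^2) set \<Rightarrow> real" where
  "lyap_line k p A l = (\<Sum>j=1..k. p j * ln \<bar>line_eig (A j) l\<bar>)"

definition quasi_irreducible :: "nat \<Rightarrow> (nat \<Rightarrow> real) \<Rightarrow> (nat \<Rightarrow> mat2) \<Rightarrow> bool" where
  "quasi_irreducible k p A \<longleftrightarrow>
     \<not> (\<exists>l. inv_line k A l \<and> lyap_line k p A l < lyap k p A)"

definition diagonalizable :: "nat \<Rightarrow> (nat \<Rightarrow> mat2) \<Rightarrow> bool" where
  "diagonalizable k A \<longleftrightarrow>
     (\<exists>l1 l2. inv_line k A l1 \<and> inv_line k A l2 \<and> l1 \<inter> l2 = {0})"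

end

theory Submission
  imports Defs
begin

text \<open>
  Suppose A is not diagonalizable and neither A nor A^-1 is quasi-irreducible, witnessed by
  lines l and l'. An A^-1-invariant line is A-invariant, and two distinct A-invariant lines
  would make A diagonalizable, so l = l'. The exponents of A and A^-1 on l are opposite, so
  one of them is nonnegative, and it suffices to show L(A) = L(A|l) whenever L(A|l) >= 0.

  In an orthonormal basis (u, rot90 u) with l = span {u} every A_j is upper triangular with
  diagonal (a_j, +-1/a_j). With S_n = sum_{i<n} log |a_{x_i}|, the norm of A^(n)(x) lies
  between exp S_n and exp S_n + exp (-S_n) + B sum_{i<n} exp (S_n - S_{i+1} - S_i).
  By the strong law of large numbers (obtained here from Hoeffding's inequality and
  Borel-Cantelli) S_n / n tends to L(A|l) almost surely. As this limit is nonnegative and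
  |S_i - i L(A|l)| = o(n) uniformly in i <= n, both bounds grow like exp (n L(A|l)).
\<close>

section \<open>Invariant lines in the plane\<close>

definition rot90 :: "real^2 \<Rightarrow> real^2" where
  "rot90 u = vector [- (u$2), u$1]"

lemma inner_vec2: "(x::real^2) \<bullet> y = x$1 * y$1 + x$2 * y$2"
  by (simp add: inner_vec_def sum_2)

lemma norm_eq_1_vec2: "norm (u::real^2) = 1 \<longleftrightarrow> (u$1)^2 + (u$2)^2 = 1"
  by (simp add: norm_eq_1 inner_vec2 power2_eq_square)

lemma norm_rot90 [simp]: "norm (rot90 u) = norm u"
  by (simp add: norm_eq_sqrt_inner inner_vec2 rot90_def)

lemma orthonormal_decomp_rot90:
  assumes "norm (u::real^2) = 1"
  shows "v = (v \<bullet> u) *\<^sub>R u + (v \<bullet> rot90 u) *\<^sub>R rot90 u"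
proof -
  have u: "(u$1)^2 + (u$2)^2 = 1"
    using assms by (simp only: norm_eq_1_vec2)
  have "v$1 = (v$1 * u$1 + v$2 * u$2) * u$1 - (v$2 * u$1 - v$1 * u$2) * u$2"
       "v$2 = (v$1 * u$1 + v$2 * u$2) * u$2 + (v$2 * u$1 - v$1 * u$2) * u$1"
    using u by algebra+
  then show ?thesis
    unfolding vec_eq_iff forall_2 rot90_def inner_vec2 by simp
qed

lemma eigenvalue_mult_rot90_coeff_eq_det:
  fixes M :: "real^2^2"
  assumes u: "norm u = 1" and Mu: "M *v u = a *\<^sub>R u"
  shows "a * ((M *v rot90 u) \<bullet> rot90 u) = det M"
proof -
  have u1: "(u$1)^2 + (u$2)^2 = 1"
    using u by (simp only: norm_eq_1_vec2)
  have e1: "M$1$1 * u$1 + M$1$2 * u$2 = a * u$1" and e2: "M$2$1 * u$1 + M$2$2 * u$2 = a * u$2"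
    using Mu by (simp_all add: vec_eq_iff forall_2 matrix_vector_mult_def sum_2)
  have "a * ((M *v rot90 u) \<bullet> rot90 u) =
     a * ((M$1$1 * (- u$2) + M$1$2 * u$1) * (- u$2) + (M$2$1 * (- u$2) + M$2$2 * u$1) * u$1)"
    by (simp add: inner_vec2 rot90_def matrix_vector_mult_def sum_2)
  also have "\<dots> = det M"
    unfolding det_2 using u1 e1 e2 by algebra
  finally show ?thesis .
qed

lemma span_singleton_scaleR:
  fixes u :: "'a::real_vector"
  assumes "c \<noteq> 0"
  shows "span {c *\<^sub>R u} = span {u}"
  using span_image_scale[of "{u}" "\<lambda>_. c"] assms by simp

lemma is_line_unit_span:
  assumes "is_line l"
  obtains u :: "real^2" where "norm u = 1" "l = span {u}"
proof -
  obtain B where B: "B \<subseteq> l" "independent B" "l \<subseteq> span B" "card B = dim l"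
    by (rule basis_exists)
  then obtain v where v: "B = {v}"
    using assms by (auto simp: is_line_def card_1_singleton_iff)
  have "v \<noteq> 0" using B(2) v by (auto simp: dependent_single)
  have "span B \<subseteq> l" using B(1) assms by (intro span_minimal) (auto simp: is_line_def)
  then have "l = span {v}" using B(3) v by auto
  also have "\<dots> = span {(1 / norm v) *\<^sub>R v}"
    using \<open>v \<noteq> 0\<close> by (simp add: span_singleton_scaleR)
  finally show ?thesis using \<open>v \<noteq> 0\<close> by (intro that[of "(1 / norm v) *\<^sub>R v"]) auto
qed

lemma span_singleton_inter:
  fixes u u' :: "'a::real_vector"
  assumes "span {u} \<noteq> span {u'}"
  shows "span {u} \<inter> span {u'} = {0}"
proof (rule ccontr)
  assume "span {u} \<inter> span {u'} \<noteq> {0}"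
  then obtain v where v: "v \<in> span {u}" "v \<in> span {u'}" "v \<noteq> 0"
    using span_zero by blast
  obtain t where "v = t *\<^sub>R u" using v(1) by (auto simp: span_singleton)
  moreover obtain t' where "v = t' *\<^sub>R u'" using v(2) by (auto simp: span_singleton)
  ultimately have "span {v} = span {u}" "span {v} = span {u'}"
    using v(3) span_singleton_scaleR by (metis scale_zero_left)+
  then show False using assms by simp
qed

lemma lines_inter_eq_zero:
  assumes "is_line l" "is_line l'" "l \<noteq> l'"
  shows "l \<inter> l' = {0}"
  by (metis assms is_line_unit_span span_singleton_inter)

lemma span_singleton_invariant:
  fixes M :: "real^'n^'n"
  assumes "M *v u = c *\<^sub>R u"
  shows "(\<lambda>v. M *v v) ` span {u} \<subseteq> span {u}"
  using assms by (auto simp: span_singleton matrix_vector_mult_scaleR)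

lemma line_eig_eq:
  fixes M :: "real^2^2"
  assumes u: "u \<noteq> 0" and Mu: "M *v u = a *\<^sub>R u"
  shows "line_eig M (span {u}) = a"
proof -
  have "\<forall>v\<in>span {u}. M *v v = a *s v"
    using Mu by (auto simp: span_singleton matrix_vector_mult_scaleR scalar_mult_eq_scaleR)
  then have "\<forall>v\<in>span {u}. M *v v = line_eig M (span {u}) *s v"
    unfolding line_eig_def by (rule someI)
  then have "M *v u = line_eig M (span {u}) *s u"
    using span_base[of u "{u}"] by blast
  then show ?thesis using Mu u by (auto simp: scalar_mult_eq_scaleR)
qed

lemma inv_line_eigvec:
  assumes "inv_line k A (span {u})" "u \<noteq> 0" "j \<in> {1..k}"
  shows "A j *v u = line_eig (A j) (span {u}) *\<^sub>R u"
proof -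
  have "A j *v u \<in> span {u}"
    using assms(1,3) span_base[of u "{u}"] unfolding inv_line_def by blast
  then obtain a where "A j *v u = a *\<^sub>R u" by (auto simp: span_singleton)
  then show ?thesis using line_eig_eq[OF assms(2)] by metis
qed

lemma left_inverse_eigvec:
  fixes M N :: "real^'n^'n"
  assumes NM: "N ** M = mat 1" and Mu: "M *v u = a *\<^sub>R u" and u: "u \<noteq> 0"
  shows "N *v u = inverse a *\<^sub>R u"
proof -
  have "u = N *v (M *v u)" by (simp add: matrix_vector_mul_assoc NM)
  also have "\<dots> = a *\<^sub>R (N *v u)" by (simp add: Mu matrix_vector_mult_scaleR)
  finally have u_eq: "u = a *\<^sub>R (N *v u)" .
  then have "a \<noteq> 0" using u by auto
  with u_eq show ?thesis by (metis scaleR_scaleR left_inverse scaleR_one)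
qed

lemma matrix_inv_mult:
  fixes M :: "real^'n^'n"
  assumes "det M \<noteq> 0"
  shows "matrix_inv M ** M = mat 1" "M ** matrix_inv M = mat 1"
proof -
  have "\<exists>M'. M ** M' = mat 1 \<and> M' ** M = mat 1"
    using assms by (simp add: invertible_det_nz flip: invertible_def)
  then have "M ** matrix_inv M = mat 1 \<and> matrix_inv M ** M = mat 1"
    unfolding matrix_inv_def by (rule someI_ex)
  then show "matrix_inv M ** M = mat 1" "M ** matrix_inv M = mat 1" by auto
qed

lemma SL2pm_matrix_inv:
  assumes "SL2pm M"
  shows "SL2pm (matrix_inv M)"
proof -
  have "det M \<noteq> 0" using assms unfolding SL2pm_def by auto
  then have "det (matrix_inv M) * det M = 1"
    using matrix_inv_mult(1) by (metis det_mul det_I)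
  then show ?thesis using assms unfolding SL2pm_def by (auto simp: algebra_simps)
qed

lemma inv_line_left_inverse:
  assumes il: "inv_line k M l" and NM: "\<forall>j\<in>{1..k}. N j ** M j = mat 1"
  shows "inv_line k N l" "lyap_line k p N l = - lyap_line k p M l"
proof -
  obtain u where u: "norm u = 1" "l = span {u}"
    using il is_line_unit_span unfolding inv_line_def by blast
  then have "u \<noteq> 0" by auto
  have Nu: "N j *v u = inverse (line_eig (M j) l) *\<^sub>R u" if "j \<in> {1..k}" for j
    using left_inverse_eigvec[OF _ inv_line_eigvec] NM il that u \<open>u \<noteq> 0\<close> by blast
  then show "inv_line k N l"
    using il span_singleton_invariant unfolding inv_line_def u(2) by blast
  have "line_eig (N j) l = inverse (line_eig (M j) l)" if "j \<in> {1..k}" for j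
    using line_eig_eq[OF \<open>u \<noteq> 0\<close> Nu[OF that]] u(2) by simp
  then show "lyap_line k p N l = - lyap_line k p M l"
    unfolding lyap_line_def sum_negf[symmetric]
    by (intro sum.cong refl) (simp add: ln_inverse abs_inverse)
qed

lemma inv_line_triangular:
  assumes il: "inv_line k A l" and sl: "\<forall>j\<in>{1..k}. SL2pm (A j)"
  obtains u b d where "norm u = 1"
    "\<And>j. j \<in> {1..k} \<Longrightarrow> A j *v u = line_eig (A j) l *\<^sub>R u"
    "\<And>j. j \<in> {1..k} \<Longrightarrow> A j *v rot90 u = b j *\<^sub>R u + d j *\<^sub>R rot90 u"
    "\<And>j. j \<in> {1..k} \<Longrightarrow> \<bar>line_eig (A j) l * d j\<bar> = 1"
proof -
  obtain u where u: "norm u = 1" "l = span {u}"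
    using il is_line_unit_span unfolding inv_line_def by blast
  then have Au: "A j *v u = line_eig (A j) l *\<^sub>R u" if "j \<in> {1..k}" for j
    using inv_line_eigvec il that by fastforce
  define b where "b j = (A j *v rot90 u) \<bullet> u" for j
  define d where "d j = (A j *v rot90 u) \<bullet> rot90 u" for j
  show ?thesis
  proof (rule that[OF u(1)])
    fix j assume j: "j \<in> {1..k}"
    show "A j *v u = line_eig (A j) l *\<^sub>R u" by (rule Au[OF j])
    show "A j *v rot90 u = b j *\<^sub>R u + d j *\<^sub>R rot90 u"
      unfolding b_def d_def by (rule orthonormal_decomp_rot90[OF u(1)])
    show "\<bar>line_eig (A j) l * d j\<bar> = 1"
      using eigenvalue_mult_rot90_coeff_eq_det[OF u(1) Au[OF j]] sl j
      unfolding d_def SL2pm_def by force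
  qed
qed

section \<open>Norms of products of upper triangular matrices\<close>

lemma opnorm_triangular_bounds:
  fixes M :: "real^2^2"
  assumes u: "norm u = 1"
    and Mu: "M *v u = a *\<^sub>R u"
    and Mw: "M *v rot90 u = b *\<^sub>R u + d *\<^sub>R rot90 u"
  shows "\<bar>a\<bar> \<le> opnorm M" "opnorm M \<le> \<bar>a\<bar> + \<bar>b\<bar> + \<bar>d\<bar>"
proof -
  have "norm (M *v u) \<le> opnorm M * norm u"
    unfolding opnorm_def by (rule onorm) simp
  then show "\<bar>a\<bar> \<le> opnorm M" using u Mu by simp
  show "opnorm M \<le> \<bar>a\<bar> + \<bar>b\<bar> + \<bar>d\<bar>"
    unfolding opnorm_def
  proof (rule onorm_le)
    fix v :: "real^2"
    define s t where "s = v \<bullet> u" and "t = v \<bullet> rot90 u"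
    have st: "\<bar>s\<bar> \<le> norm v" "\<bar>t\<bar> \<le> norm v"
      using Cauchy_Schwarz_ineq2[of v u] Cauchy_Schwarz_ineq2[of v "rot90 u"] u
      unfolding s_def t_def by auto
    have "v = s *\<^sub>R u + t *\<^sub>R rot90 u"
      unfolding s_def t_def by (rule orthonormal_decomp_rot90[OF u])
    then have "M *v v = (s * a + t * b) *\<^sub>R u + (t * d) *\<^sub>R rot90 u"
      by (simp add: matrix_vector_right_distrib matrix_vector_mult_scaleR Mu Mw algebra_simps)
    then have "norm (M *v v) \<le> \<bar>s * a + t * b\<bar> + \<bar>t * d\<bar>"
      using norm_triangle_ineq[of "(s * a + t * b) *\<^sub>R u" "(t * d) *\<^sub>R rot90 u"] u by simp
    also have "\<dots> \<le> \<bar>s\<bar> * \<bar>a\<bar> + \<bar>t\<bar> * \<bar>b\<bar> + \<bar>t\<bar> * \<bar>d\<bar>"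
      using abs_triangle_ineq[of "s * a" "t * b"] by (simp add: abs_mult)
    also have "\<dots> \<le> norm v * \<bar>a\<bar> + norm v * \<bar>b\<bar> + norm v * \<bar>d\<bar>"
      using st by (intro add_mono mult_right_mono) auto
    finally show "norm (M *v v) \<le> (\<bar>a\<bar> + \<bar>b\<bar> + \<bar>d\<bar>) * norm v"
      by (simp add: algebra_simps)
  qed
qed

lemma abs_prod_reciprocals:
  fixes a d :: "nat \<Rightarrow> real"
  assumes "\<And>i. \<bar>a i * d i\<bar> = 1"
  shows "\<bar>\<Prod>i<n. a i\<bar> = exp (\<Sum>i<n. ln \<bar>a i\<bar>)"
    and "\<bar>\<Prod>i<n. d i\<bar> = exp (- (\<Sum>i<n. ln \<bar>a i\<bar>))"
proof -
  have a0: "a i \<noteq> 0" for i using assms[of i] by auto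
  then show "\<bar>\<Prod>i<n. a i\<bar> = exp (\<Sum>i<n. ln \<bar>a i\<bar>)"
    by (simp add: abs_prod exp_sum)
  have "\<bar>\<Prod>i<n. d i\<bar> = (\<Prod>i<n. exp (- ln \<bar>a i\<bar>))"
    unfolding abs_prod using assms a0
    by (intro prod.cong refl) (simp add: exp_minus abs_mult field_simps)
  then show "\<bar>\<Prod>i<n. d i\<bar> = exp (- (\<Sum>i<n. ln \<bar>a i\<bar>))"
    by (simp add: exp_sum sum_negf[symmetric])
qed

lemma cocycle_iter_triangular:
  fixes A :: "nat \<Rightarrow> real^2^2" and x :: "int \<Rightarrow> nat" and a b d :: "nat \<Rightarrow> real"
  assumes Au: "\<And>n. A (x (int n)) *v u = a n *\<^sub>R u"
    and Aw: "\<And>n. A (x (int n)) *v w = b n *\<^sub>R u + d n *\<^sub>R w"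
    and ad: "\<And>n. \<bar>a n * d n\<bar> = 1"
    and bB: "\<And>n. \<bar>b n\<bar> \<le> B"
  defines "S \<equiv> \<lambda>n. \<Sum>i<n. ln \<bar>a i\<bar>"
  shows "\<exists>\<beta>. cocycle_iter A x n *v u = (\<Prod>i<n. a i) *\<^sub>R u
           \<and> cocycle_iter A x n *v w = \<beta> *\<^sub>R u + (\<Prod>i<n. d i) *\<^sub>R w
           \<and> \<bar>\<beta>\<bar> \<le> B * (\<Sum>i<n. exp (S n - S (Suc i) - S i))"
proof (induction n)
  case 0
  then show ?case by simp
next
  case (Suc n)
  then obtain \<beta> where IH: "cocycle_iter A x n *v u = (\<Prod>i<n. a i) *\<^sub>R u"
      "cocycle_iter A x n *v w = \<beta> *\<^sub>R u + (\<Prod>i<n. d i) *\<^sub>R w"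
      "\<bar>\<beta>\<bar> \<le> B * (\<Sum>i<n. exp (S n - S (Suc i) - S i))"
    by blast
  have a0: "a i \<noteq> 0" for i using ad[of i] by auto
  have D: "\<bar>\<Prod>i<n. d i\<bar> = exp (- S n)"
    unfolding S_def by (rule abs_prod_reciprocals(2)[OF ad])
  define \<beta>' where "\<beta>' = \<beta> * a n + (\<Prod>i<n. d i) * b n"
  have "cocycle_iter A x (Suc n) *v u = (\<Prod>i<Suc n. a i) *\<^sub>R u"
    using IH(1) Au[of n]
    by (simp add: matrix_vector_mul_assoc[symmetric] matrix_vector_mult_scaleR mult.commute)
  moreover have "cocycle_iter A x (Suc n) *v w = \<beta>' *\<^sub>R u + (\<Prod>i<Suc n. d i) *\<^sub>R w"
    using IH(2) Au[of n] Aw[of n] unfolding \<beta>'_def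
    by (simp add: matrix_vector_mul_assoc[symmetric] matrix_vector_right_distrib
        matrix_vector_mult_scaleR algebra_simps scaleR_add_right)
  moreover have "\<bar>\<beta>'\<bar> \<le> B * (\<Sum>i<Suc n. exp (S (Suc n) - S (Suc i) - S i))"
  proof -
    have shift: "(\<Sum>i<n. exp (S n - S (Suc i) - S i)) * \<bar>a n\<bar>
        = (\<Sum>i<n. exp (S (Suc n) - S (Suc i) - S i))"
      unfolding sum_distrib_right S_def by (intro sum.cong refl) (simp add: exp_add exp_diff a0)
    have "\<bar>\<beta>'\<bar> \<le> \<bar>\<beta>\<bar> * \<bar>a n\<bar> + exp (- S n) * \<bar>b n\<bar>"
      unfolding \<beta>'_def using abs_triangle_ineq[of "\<beta> * a n" "(\<Prod>i<n. d i) * b n"] D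
      by (simp add: abs_mult)
    also have "\<dots> \<le> B * (\<Sum>i<n. exp (S n - S (Suc i) - S i)) * \<bar>a n\<bar> + exp (- S n) * B"
      using IH(3) bB[of n] by (intro add_mono mult_right_mono mult_left_mono) auto
    also have "\<dots> = B * (\<Sum>i<Suc n. exp (S (Suc n) - S (Suc i) - S i))"
      using shift by (simp add: algebra_simps)
    finally show ?thesis .
  qed
  ultimately show ?case by blast
qed

lemma cocycle_iter_opnorm_bounds:
  fixes A :: "nat \<Rightarrow> real^2^2" and x :: "int \<Rightarrow> nat" and a b d :: "nat \<Rightarrow> real"
  assumes u: "norm u = 1"
    and Au: "\<And>n. A (x (int n)) *v u = a n *\<^sub>R u"
    and Aw: "\<And>n. A (x (int n)) *v rot90 u = b n *\<^sub>R u + d n *\<^sub>R rot90 u"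
    and ad: "\<And>n. \<bar>a n * d n\<bar> = 1"
    and bB: "\<And>n. \<bar>b n\<bar> \<le> B"
  defines "S \<equiv> \<lambda>n. \<Sum>i<n. ln \<bar>a i\<bar>"
  shows "exp (S n) \<le> opnorm (cocycle_iter A x n)"
    and "opnorm (cocycle_iter A x n)
           \<le> exp (S n) + exp (- S n) + B * (\<Sum>i<n. exp (S n - S (Suc i) - S i))"
proof -
  obtain \<beta> where \<beta>: "cocycle_iter A x n *v u = (\<Prod>i<n. a i) *\<^sub>R u"
      "cocycle_iter A x n *v rot90 u = \<beta> *\<^sub>R u + (\<Prod>i<n. d i) *\<^sub>R rot90 u"
      "\<bar>\<beta>\<bar> \<le> B * (\<Sum>i<n. exp (S n - S (Suc i) - S i))"
    using cocycle_iter_triangular[where A=A and x=x and w="rot90 u", OF Au Aw ad bB]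
    unfolding S_def by blast
  have prods: "\<bar>\<Prod>i<n. a i\<bar> = exp (S n)" "\<bar>\<Prod>i<n. d i\<bar> = exp (- S n)"
    unfolding S_def by (rule abs_prod_reciprocals[OF ad])+
  show "exp (S n) \<le> opnorm (cocycle_iter A x n)"
    using opnorm_triangular_bounds(1)[OF u \<beta>(1,2)] prods by simp
  show "opnorm (cocycle_iter A x n)
      \<le> exp (S n) + exp (- S n) + B * (\<Sum>i<n. exp (S n - S (Suc i) - S i))"
    using opnorm_triangular_bounds(2)[OF u \<beta>(1,2)] prods \<beta>(3) by simp
qed

section \<open>Growth rates of norms\<close>

lemma running_max_over_n_tendsto_0:
  fixes a :: "nat \<Rightarrow> real"
  assumes "(\<lambda>n. a n / real n) \<longlonglongrightarrow> 0"
  shows "(\<lambda>n. Max ((\<lambda>i. \<bar>a i\<bar>) ` {..n}) / real n) \<longlonglongrightarrow> 0"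
proof (rule tendstoI)
  fix r :: real assume "r > 0"
  define e where "e = r / 2"
  have e: "e > 0" using \<open>r > 0\<close> by (simp add: e_def)
  obtain N where N: "\<And>n. n \<ge> N \<Longrightarrow> \<bar>a n / real n\<bar> < e"
    using LIMSEQ_D[OF assms e] by auto
  define C where "C = Max ((\<lambda>i. \<bar>a i\<bar>) ` {..N})"
  have C: "\<bar>a i\<bar> \<le> C" if "i \<le> N" for i
    unfolding C_def using that by (intro Max_ge) auto
  have bound: "Max ((\<lambda>i. \<bar>a i\<bar>) ` {..n}) \<le> C + e * real n" for n
  proof (rule Max.boundedI)
    fix y assume "y \<in> (\<lambda>i. \<bar>a i\<bar>) ` {..n}"
    then obtain i where "i \<in> {..n}" "y = \<bar>a i\<bar>" by blast
    have "\<bar>a i\<bar> \<le> C + e * real n"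
    proof (cases "i \<le> N")
      case True
      then show ?thesis using C e by (simp add: add_increasing2)
    next
      case False
      then have "\<bar>a i\<bar> < e * real i" using N[of i] by (simp add: abs_divide divide_less_eq)
      also have "\<dots> \<le> e * real n" using \<open>i \<in> {..n}\<close> e by simp
      finally show ?thesis using C[of 0] by simp
    qed
    then show "y \<le> C + e * real n" using \<open>y = \<bar>a i\<bar>\<close> by simp
  qed auto
  have "(\<lambda>n. C / real n) \<longlonglongrightarrow> 0"
    by (rule lim_const_over_n)
  then have "eventually (\<lambda>n. C / real n < e) sequentially"
    using e by (rule order_tendstoD)
  then show "eventually (\<lambda>n. dist (Max ((\<lambda>i. \<bar>a i\<bar>) ` {..n}) / real n) 0 < r) sequentially"
  proof (rule eventually_mono)
    fix n assume "C / real n < e"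
    have "Max ((\<lambda>i. \<bar>a i\<bar>) ` {..n}) / real n \<le> C / real n + e"
    proof (cases "n = 0")
      case False
      then have "Max ((\<lambda>i. \<bar>a i\<bar>) ` {..n}) / real n \<le> (C + e * real n) / real n"
        using bound[of n] by (simp add: divide_right_mono)
      also have "\<dots> = C / real n + e" using False by (simp add: field_simps)
      finally show ?thesis .
    qed (use e in simp)
    moreover have "0 \<le> Max ((\<lambda>i. \<bar>a i\<bar>) ` {..n})"
      by (rule order.trans[OF abs_ge_zero Max_ge[of _ "\<bar>a 0\<bar>"]]) auto
    moreover have "C / real n + e < r" using \<open>C / real n < e\<close> unfolding e_def by linarith
    ultimately show "dist (Max ((\<lambda>i. \<bar>a i\<bar>) ` {..n}) / real n) 0 < r"
      by (simp add: dist_real_def)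
  qed
qed

lemma growth_bound_le_exp_deviation:
  fixes S :: "nat \<Rightarrow> real"
  assumes E: "E \<ge> 0" and B: "B \<ge> 0" and n: "n \<ge> 1"
    and dev: "\<And>i. i \<le> n \<Longrightarrow> \<bar>S i - real i * E\<bar> \<le> U"
  shows "exp (S n) + exp (- S n) + B * (\<Sum>i<n. exp (S n - S (Suc i) - S i))
           \<le> (2 + B) * real n * exp (real n * E + 3 * U)"
proof -
  define K where "K = real n * E + 3 * U"
  have "real n * E \<ge> 0" using E by simp
  then have "S n \<le> K" "- S n \<le> K"
    using dev[of n] unfolding K_def abs_le_iff by linarith+
  then have "exp (S n) \<le> exp K" "exp (- S n) \<le> exp K" by simp_all
  moreover have "S n - S (Suc i) - S i \<le> K" if "i < n" for i
  proof -
    have "real (Suc i) * E \<ge> 0" "real i * E \<ge> 0" using E by simp_all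
    then show ?thesis
      using dev[of n] dev[of "Suc i"] dev[of i] that unfolding K_def abs_le_iff by linarith
  qed
  then have "B * (\<Sum>i<n. exp (S n - S (Suc i) - S i)) \<le> B * (\<Sum>i<n. exp K)"
    using B by (intro mult_left_mono sum_mono) auto
  ultimately have "exp (S n) + exp (- S n) + B * (\<Sum>i<n. exp (S n - S (Suc i) - S i))
      \<le> exp K + exp K + B * (\<Sum>i<n. exp K)"
    by linarith
  also have "\<dots> \<le> (2 + B) * real n * exp K"
    using n B by (simp add: algebra_simps mult_right_mono)
  finally show ?thesis unfolding K_def .
qed

lemma ln_growth_squeeze:
  fixes S N :: "nat \<Rightarrow> real" and E B :: real
  assumes lim: "(\<lambda>n. S n / real n) \<longlonglongrightarrow> E" and E: "E \<ge> 0" and B: "B \<ge> 0"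
    and lower: "\<And>n. exp (S n) \<le> N n"
    and upper: "\<And>n. N n \<le> exp (S n) + exp (- S n) + B * (\<Sum>i<n. exp (S n - S (Suc i) - S i))"
  shows "(\<lambda>n. ln (N n) / real n) \<longlonglongrightarrow> E"
proof -
  define U where "U n = Max ((\<lambda>i. \<bar>S i - real i * E\<bar>) ` {..n})" for n
  have dev: "\<bar>S i - real i * E\<bar> \<le> U n" if "i \<le> n" for i n
    unfolding U_def using that by (intro Max_ge) auto
  have "(\<lambda>n. S n / real n - E) \<longlonglongrightarrow> 0"
    using lim by (rule LIM_zero)
  then have "(\<lambda>n. (S n - real n * E) / real n) \<longlonglongrightarrow> 0"
    by (rule Lim_transform_eventually)
       (use eventually_gt_at_top[of 0] in \<open>eventually_elim, simp add: field_simps\<close>)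
  then have U: "(\<lambda>n. U n / real n) \<longlonglongrightarrow> 0"
    unfolding U_def by (rule running_max_over_n_tendsto_0)
  have N_pos: "N n > 0" for n
    using lower[of n] by (meson exp_gt_zero less_le_trans)
  have N_le: "N n \<le> (2 + B) * real n * exp (real n * E + 3 * U n)" if "n \<ge> 1" for n
    using upper[of n] growth_bound_le_exp_deviation[OF E B that dev[of _ n]] by linarith
  have ev_lower: "eventually (\<lambda>n. S n / real n \<le> ln (N n) / real n) sequentially"
    using lower N_pos by (intro always_eventually allI divide_right_mono) (simp_all add: ln_ge_iff)
  have ev_upper: "eventually (\<lambda>n. ln (N n) / real n
      \<le> ln (2 + B) / real n + ln (real n) / real n + E + 3 * (U n / real n)) sequentially"
    using eventually_ge_at_top[of 1]
  proof eventually_elim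
    case (elim n)
    have "ln (N n) \<le> ln ((2 + B) * real n * exp (real n * E + 3 * U n))"
      using N_le[OF elim] N_pos[of n] by simp
    also have "\<dots> = ln (2 + B) + ln (real n) + (real n * E + 3 * U n)"
      using B elim by (simp add: ln_mult)
    finally have "ln (N n) / real n \<le> (ln (2 + B) + ln (real n) + (real n * E + 3 * U n)) / real n"
      by (simp add: divide_right_mono)
    also have "\<dots> = ln (2 + B) / real n + ln (real n) / real n + E + 3 * (U n / real n)"
      using elim by (simp add: add_divide_distrib)
    finally show ?case .
  qed
  have "(\<lambda>n. ln (2 + B) / real n + ln (real n) / real n + E + 3 * (U n / real n))
      \<longlonglongrightarrow> 0 + 0 + E + 3 * 0"
    by (intro tendsto_add tendsto_mult tendsto_const lim_const_over_n lim_ln_over_n U)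
  then have "(\<lambda>n. ln (2 + B) / real n + ln (real n) / real n + E + 3 * (U n / real n))
      \<longlonglongrightarrow> E"
    by simp
  with ev_lower ev_upper lim show ?thesis
    by (rule tendsto_sandwich)
qed

section \<open>A strong law of large numbers\<close>

lemma (in prob_space) THE_AE_LIMSEQ:
  assumes "AE x in M. (\<lambda>n. f x n) \<longlonglongrightarrow> (c::real)"
  shows "(THE c. AE x in M. (\<lambda>n. f x n) \<longlonglongrightarrow> c) = c"
proof (rule the_equality)
  fix c' assume "AE x in M. (\<lambda>n. f x n) \<longlonglongrightarrow> c'"
  with assms have "AE x in M. c' = c"
    by eventually_elim (rule LIMSEQ_unique)
  then show "c' = c" by simp
qed (fact assms)

lemma (in prob_space) AE_LIMSEQ_of_summable_tail_prob:
  fixes Y :: "nat \<Rightarrow> 'a \<Rightarrow> real"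
  assumes [measurable]: "\<And>n. Y n \<in> borel_measurable M"
    and summable: "\<And>e. e > 0 \<Longrightarrow> summable (\<lambda>n. prob {x \<in> space M. e \<le> \<bar>Y n x - c\<bar>})"
  shows "AE x in M. (\<lambda>n. Y n x) \<longlonglongrightarrow> c"
proof -
  have "AE x in M. eventually (\<lambda>n. \<bar>Y n x - c\<bar> < inverse (Suc m)) sequentially" for m
  proof -
    have "AE x in M. eventually
        (\<lambda>n. x \<in> space M - {x \<in> space M. inverse (Suc m) \<le> \<bar>Y n x - c\<bar>}) sequentially"
      by (rule borel_cantelli_AE1) (auto simp: emeasure_eq_measure intro: summable)
    then show ?thesis
      by eventually_elim (auto elim: eventually_mono)
  qed
  then have "AE x in M. \<forall>m. eventually (\<lambda>n. \<bar>Y n x - c\<bar> < inverse (Suc m)) sequentially"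
    by (simp add: AE_all_countable)
  then show ?thesis
  proof eventually_elim
    case (elim x)
    show ?case
    proof (rule tendstoI)
      fix r :: real assume "r > 0"
      then obtain m where "inverse (real (Suc m)) < r"
        using reals_Archimedean by blast
      have "eventually (\<lambda>n. \<bar>Y n x - c\<bar> < inverse (Suc m)) sequentially"
        using elim by blast
      then show "eventually (\<lambda>n. dist (Y n x) c < r) sequentially"
        by eventually_elim (use \<open>inverse (real (Suc m)) < r\<close> in \<open>simp add: dist_real_def\<close>)
    qed
  qed
qed

lemma product_prob_space_measure_pmf: "product_prob_space (\<lambda>_. measure_pmf q)"
  by (rule product_prob_spaceI) (rule prob_space_measure_pmf)

lemma indep_vars_PiM_coordinates:
  fixes q :: "'a pmf" and f :: "'a \<Rightarrow> real"
  assumes J: "finite J" "J \<noteq> {}"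
  shows "prob_space.indep_vars (PiM (UNIV::'i set) (\<lambda>_. measure_pmf q)) (\<lambda>_. borel)
           (\<lambda>i x. f (x i)) J"
proof -
  interpret P: product_prob_space "\<lambda>_::'i. measure_pmf q" UNIV
    by (rule product_prob_space_measure_pmf)
  have "distr (PiM UNIV (\<lambda>_. measure_pmf q)) (PiM J (\<lambda>_. measure_pmf q)) (\<lambda>x. \<lambda>i\<in>J. x i)
      = PiM J (\<lambda>i. distr (PiM UNIV (\<lambda>_. measure_pmf q)) (measure_pmf q) (\<lambda>x. x i))"
    using P.distr_PiM_restrict_finite[OF J(1)] by (simp add: P.PiM_component)
  then have "P.indep_vars (\<lambda>_. measure_pmf q) (\<lambda>i x. x i) J"
    by (subst P.indep_vars_iff_distr_eq_PiM'[OF J(2)]) auto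
  then show ?thesis
    by (rule P.indep_vars_compose2[where Y="\<lambda>_. f"]) simp
qed

lemma distr_PiM_coordinate:
  "distr (PiM (UNIV::'i set) (\<lambda>_. measure_pmf q)) borel (\<lambda>x. f (x i))
     = distr (measure_pmf q) borel (f :: 'a \<Rightarrow> real)"
proof -
  interpret P: product_prob_space "\<lambda>_::'i. measure_pmf q" UNIV
    by (rule product_prob_space_measure_pmf)
  have "distr (PiM UNIV (\<lambda>_. measure_pmf q)) borel (\<lambda>x. f (x i))
      = distr (distr (PiM UNIV (\<lambda>_. measure_pmf q)) (measure_pmf q) (\<lambda>x. x i)) borel f"
    by (subst distr_distr) (auto simp: comp_def)
  then show ?thesis by (simp add: P.PiM_component)
qed

lemma expectation_PiM_coordinate:
  "integral\<^sup>L (PiM (UNIV::'i set) (\<lambda>_. measure_pmf q)) (\<lambda>x. f (x i))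
     = measure_pmf.expectation q (f :: 'a \<Rightarrow> real)"
proof -
  interpret P: product_prob_space "\<lambda>_::'i. measure_pmf q" UNIV
    by (rule product_prob_space_measure_pmf)
  have "measure_pmf.expectation q f
      = integral\<^sup>L (distr (PiM UNIV (\<lambda>_. measure_pmf q)) (measure_pmf q) (\<lambda>x. x i)) f"
    by (simp add: P.PiM_component)
  also have "\<dots> = integral\<^sup>L (PiM UNIV (\<lambda>_. measure_pmf q)) (\<lambda>x. f (x i))"
    by (subst integral_distr) auto
  finally show ?thesis ..
qed

lemma Hoeffding_PiM_coordinates:
  fixes q :: "'a pmf" and f :: "'a \<Rightarrow> real" and K e :: real
  assumes fK: "\<And>j. \<bar>f j\<bar> \<le> K" and e: "e \<ge> 0" and n: "n \<ge> 1"
  defines "M \<equiv> PiM (UNIV::int set) (\<lambda>_. measure_pmf q)"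
  shows "measure M {x \<in> space M.
              e \<le> \<bar>(\<Sum>i<n. f (x (int i))) / real n - measure_pmf.expectation q f\<bar>}
         \<le> 2 * exp (- 2 * real n * e\<^sup>2 / (2 * K + 2)\<^sup>2)"
proof -
  interpret prob_space M
    unfolding M_def by (rule prob_space_PiM) (simp add: prob_space_measure_pmf)
  define I where "I = int ` {..<n}"
  have I: "finite I" "I \<noteq> {}" "card I = n"
    using n unfolding I_def by (auto simp: card_image lessThan_empty_iff)
  have [measurable]: "(\<lambda>x. f (x i)) \<in> borel_measurable M" for i
    unfolding M_def by (intro measurable_compose[OF measurable_component_singleton]) auto
  \<comment> \<open>Hoeffding's inequality needs a nondegenerate interval, hence \<open>[-K-1, K+1]\<close>.\<close>
  interpret H: Hoeffding_ineq_iid M I "\<lambda>i x. f (x i)" "\<lambda>x. f (x 0)" "- K - 1" "K + 1"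
      "expectation (\<lambda>x. f (x 0))"
  proof unfold_locales
    show "indep_vars (\<lambda>_. borel) (\<lambda>i x. f (x i)) I"
      unfolding M_def by (rule indep_vars_PiM_coordinates[OF I(1,2)])
    show "distr M borel (\<lambda>x. f (x i)) = distr M borel (\<lambda>x. f (x 0))" for i
      unfolding M_def by (simp only: distr_PiM_coordinate)
    show "AE x in M. f (x 0) \<in> {- K - 1..K + 1}"
    proof (rule AE_I2)
      fix x show "f (x 0) \<in> {- K - 1..K + 1}" using fK[of "x 0"] by (simp add: abs_le_iff)
    qed
  qed (use I in auto)
  have mean: "expectation (\<lambda>x. f (x 0)) = measure_pmf.expectation q f"
    unfolding M_def by (rule expectation_PiM_coordinate)
  have sum_I: "(\<Sum>i\<in>I. f (x i)) = (\<Sum>i<n. f (x (int i)))" for x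
    unfolding I_def by (subst sum.reindex) auto
  have "0 \<le> K" using fK[of undefined] by linarith
  then have "prob {x \<in> space M. \<bar>(\<Sum>i\<in>I. f (x i)) / real (card I) - expectation (\<lambda>x. f (x 0))\<bar> \<ge> e}
      \<le> 2 * exp (- 2 * real (card I) * e\<^sup>2 / ((K + 1) - (- K - 1))\<^sup>2)"
    using H.Hoeffding_ineq_abs_ge'[OF e _ I(2)] by simp
  then show ?thesis
    unfolding sum_I mean I(3) by (simp add: algebra_simps)
qed

lemma AE_LIMSEQ_PiM_averages:
  fixes q :: "'a pmf" and f :: "'a \<Rightarrow> real" and K :: real
  assumes fK: "\<And>j. \<bar>f j\<bar> \<le> K"
  shows "AE x in PiM (UNIV::int set) (\<lambda>_. measure_pmf q).
           (\<lambda>n. (\<Sum>i<n. f (x (int i))) / real n) \<longlonglongrightarrow> measure_pmf.expectation q f"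
proof -
  define M where "M = PiM (UNIV::int set) (\<lambda>_. measure_pmf q)"
  define \<mu> where "\<mu> = measure_pmf.expectation q f"
  define avg where "avg n x = (\<Sum>i<n. f (x (int i))) / real n" for n x
  interpret prob_space M
    unfolding M_def by (rule prob_space_PiM) (simp add: prob_space_measure_pmf)
  have "AE x in M. (\<lambda>n. avg n x) \<longlonglongrightarrow> \<mu>"
  proof (rule AE_LIMSEQ_of_summable_tail_prob)
    show "avg n \<in> borel_measurable M" for n
      unfolding avg_def M_def
      by (intro borel_measurable_divide borel_measurable_sum borel_measurable_const
          measurable_compose[OF measurable_component_singleton]) auto
    fix e :: real assume "e > 0"
    define c where "c = 2 * e\<^sup>2 / (2 * K + 2)\<^sup>2"
    have "c > 0"
      using \<open>e > 0\<close> fK[of undefined] unfolding c_def by (simp add: abs_le_iff)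
    have tail: "prob {x \<in> space M. e \<le> \<bar>avg n x - \<mu>\<bar>} \<le> 2 * exp (- c) ^ n" for n
    proof (cases "n = 0")
      case False
      then have "prob {x \<in> space M. e \<le> \<bar>avg n x - \<mu>\<bar>}
          \<le> 2 * exp (- 2 * real n * e\<^sup>2 / (2 * K + 2)\<^sup>2)"
        unfolding M_def avg_def \<mu>_def using \<open>e > 0\<close>
        by (intro Hoeffding_PiM_coordinates fK) auto
      also have "\<dots> = 2 * exp (- c) ^ n"
        unfolding c_def by (simp add: exp_of_nat_mult[symmetric] field_simps)
      finally show ?thesis .
    qed (simp add: order.trans[OF prob_le_1])
    have "summable (\<lambda>n. 2 * exp (- c) ^ n)"
      using \<open>c > 0\<close> by (intro summable_mult summable_geometric) simp
    then show "summable (\<lambda>n. prob {x \<in> space M. e \<le> \<bar>avg n x - \<mu>\<bar>})"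
      by (rule summable_comparison_test') (use tail in simp)
  qed
  then show ?thesis unfolding M_def avg_def \<mu>_def .
qed

section \<open>The Bernoulli shift\<close>

lemma pmf_letter_pmf:
  assumes "prob_vec k p"
  shows "pmf (letter_pmf k p) j = (if j \<in> {1..k} then p j else 0)"
proof -
  let ?g = "\<lambda>j. if j \<in> {1..k} then p j else 0"
  have nonneg: "\<And>j. 0 \<le> ?g j"
    using assms unfolding prob_vec_def by (auto intro: less_imp_le)
  have "(\<integral>\<^sup>+x. ennreal (?g x) \<partial>count_space UNIV) = (\<Sum>x\<in>{1..k}. ennreal (?g x))"
    by (rule nn_integral_count_space') auto
  also have "\<dots> = ennreal (\<Sum>x\<in>{1..k}. ?g x)"
    using nonneg by (intro sum_ennreal) blast
  also have "(\<Sum>x\<in>{1..k}. ?g x) = 1"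
    using assms unfolding prob_vec_def by simp
  finally show ?thesis
    unfolding letter_pmf_def using nonneg by (subst pmf_embed_pmf) auto
qed

lemma set_pmf_letter_pmf:
  assumes "prob_vec k p"
  shows "set_pmf (letter_pmf k p) = {1..k}"
  using assms unfolding set_pmf_eq pmf_letter_pmf[OF assms] prob_vec_def
  by (auto simp: less_le)

lemma expectation_letter_pmf:
  assumes "prob_vec k p"
  shows "measure_pmf.expectation (letter_pmf k p) f = (\<Sum>j=1..k. p j * f j)"
  by (subst integral_measure_pmf_real[where A="{1..k}"])
     (auto simp: set_pmf_letter_pmf[OF assms] pmf_letter_pmf[OF assms] mult.commute)

lemma prob_space_bernoulli_shift_measure: "prob_space (bernoulli_shift_measure k p)"
  unfolding bernoulli_shift_measure_def
  by (rule prob_space_PiM) (simp add: prob_space_measure_pmf)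

lemma AE_bernoulli_shift_letters:
  assumes "prob_vec k p"
  shows "AE x in bernoulli_shift_measure k p. \<forall>i. x i \<in> {1..k}"
  unfolding AE_all_countable bernoulli_shift_measure_def
  by (intro allI AE_PiM_component)
     (auto simp: prob_space_measure_pmf AE_measure_pmf_iff set_pmf_letter_pmf[OF assms])

lemma AE_bernoulli_shift_averages:
  assumes "prob_vec k p"
  shows "AE x in bernoulli_shift_measure k p.
           (\<lambda>n. (\<Sum>i<n. f (x (int i))) / real n) \<longlonglongrightarrow> (\<Sum>j=1..k. p j * f j)"
proof -
  define g where "g j = (if j \<in> {1..k} then f j else 0)" for j
  have g_bounded: "\<bar>g j\<bar> \<le> (\<Sum>i=1..k. \<bar>f i\<bar>)" for j
    unfolding g_def by (auto intro: member_le_sum sum_nonneg)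
  have "measure_pmf.expectation (letter_pmf k p) g = (\<Sum>j=1..k. p j * f j)"
    unfolding expectation_letter_pmf[OF assms] g_def by simp
  then have "AE x in bernoulli_shift_measure k p.
      (\<lambda>n. (\<Sum>i<n. g (x (int i))) / real n) \<longlonglongrightarrow> (\<Sum>j=1..k. p j * f j)"
    using AE_LIMSEQ_PiM_averages[where f=g and q="letter_pmf k p", OF g_bounded]
    unfolding bernoulli_shift_measure_def by simp
  with AE_bernoulli_shift_letters[OF assms] show ?thesis
    by eventually_elim (simp add: g_def)
qed

section \<open>Lyapunov exponents of reducible cocycles\<close>

lemma inv_cocycle_mult:
  assumes "\<forall>j\<in>{1..k}. SL2pm (A j)"
  shows "\<forall>j\<in>{1..k}. inv_cocycle A j ** A j = mat 1"
    and "\<forall>j\<in>{1..k}. A j ** inv_cocycle A j = mat 1"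
proof -
  have "det (A j) \<noteq> 0" if "j \<in> {1..k}" for j
    using assms that unfolding SL2pm_def by force
  then show "\<forall>j\<in>{1..k}. inv_cocycle A j ** A j = mat 1"
    and "\<forall>j\<in>{1..k}. A j ** inv_cocycle A j = mat 1"
    by (simp_all add: inv_cocycle_def matrix_inv_mult)
qed

lemma inv_line_unique_if_not_diagonalizable:
  assumes "\<not> diagonalizable k A" "inv_line k A l" "inv_line k A l'"
  shows "l = l'"
proof (rule ccontr)
  assume "l \<noteq> l'"
  then have "l \<inter> l' = {0}"
    using assms(2,3) lines_inter_eq_zero unfolding inv_line_def by blast
  then show False
    using assms unfolding diagonalizable_def by blast
qed

lemma lyap_eqI:
  assumes "AE x in bernoulli_shift_measure k p.
             (\<lambda>n. ln (opnorm (cocycle_iter A x n)) / real n) \<longlonglongrightarrow> c"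
  shows "lyap k p A = c"
  unfolding lyap_def by (rule prob_space.THE_AE_LIMSEQ[OF prob_space_bernoulli_shift_measure assms])

lemma lyap_eq_lyap_line:
  assumes pv: "prob_vec k p" and sl: "\<forall>j\<in>{1..k}. SL2pm (A j)"
    and il: "inv_line k A l" and nonneg: "lyap_line k p A l \<ge> 0"
  shows "lyap k p A = lyap_line k p A l"
proof -
  obtain u b d where u: "norm u = 1"
    and Au: "\<And>j. j \<in> {1..k} \<Longrightarrow> A j *v u = line_eig (A j) l *\<^sub>R u"
    and Aw: "\<And>j. j \<in> {1..k} \<Longrightarrow> A j *v rot90 u = b j *\<^sub>R u + d j *\<^sub>R rot90 u"
    and ad: "\<And>j. j \<in> {1..k} \<Longrightarrow> \<bar>line_eig (A j) l * d j\<bar> = 1"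
    using inv_line_triangular[OF il sl] by blast
  define a where "a j = line_eig (A j) l" for j
  define B where "B = (\<Sum>j=1..k. \<bar>b j\<bar>)"
  have bB: "\<bar>b j\<bar> \<le> B" if "j \<in> {1..k}" for j
    unfolding B_def using that by (intro member_le_sum) auto
  have "B \<ge> 0" unfolding B_def by (simp add: sum_nonneg)
  have "AE x in bernoulli_shift_measure k p.
      (\<lambda>n. (\<Sum>i<n. ln \<bar>a (x (int i))\<bar>) / real n) \<longlonglongrightarrow> lyap_line k p A l"
    using AE_bernoulli_shift_averages[OF pv] unfolding lyap_line_def a_def .
  with AE_bernoulli_shift_letters[OF pv]
  have "AE x in bernoulli_shift_measure k p.
      (\<lambda>n. ln (opnorm (cocycle_iter A x n)) / real n) \<longlonglongrightarrow> lyap_line k p A l"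
  proof eventually_elim
    case (elim x)
    then have x: "x (int n) \<in> {1..k}" for n by blast
    note bounds = cocycle_iter_opnorm_bounds[where A=A and x=x and a="\<lambda>n. a (x (int n))"
        and b="\<lambda>n. b (x (int n))" and d="\<lambda>n. d (x (int n))" and B=B,
        OF u Au[OF x, folded a_def] Aw[OF x] ad[OF x, folded a_def] bB[OF x]]
    show ?case
      by (rule ln_growth_squeeze[OF elim(2) nonneg \<open>B \<ge> 0\<close> bounds])
  qed
  then show ?thesis by (rule lyap_eqI)
qed

theorem lemma2p5:
  fixes k :: nat and p :: "nat \<Rightarrow> real" and A :: "nat \<Rightarrow> real^2^2"
  assumes "prob_vec k p"
    and "\<forall>j\<in>{1..k}. SL2pm (A j)"
  shows "diagonalizable k A \<or> quasi_irreducible k p A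
         \<or> quasi_irreducible k p (inv_cocycle A)"
proof (rule ccontr)
  assume "\<not> ?thesis"
  then obtain l l' where l: "inv_line k A l" "lyap_line k p A l < lyap k p A"
    and l': "inv_line k (inv_cocycle A) l'"
      "lyap_line k p (inv_cocycle A) l' < lyap k p (inv_cocycle A)"
    and not_diag: "\<not> diagonalizable k A"
    unfolding quasi_irreducible_def by blast
  note mult = inv_cocycle_mult[OF assms(2)]
  have "l' = l"
    using inv_line_unique_if_not_diagonalizable[OF not_diag _ l(1)]
      inv_line_left_inverse(1)[OF l'(1) mult(2)] by blast
  have sl_inv: "\<forall>j\<in>{1..k}. SL2pm (inv_cocycle A j)"
    using assms(2) SL2pm_matrix_inv unfolding inv_cocycle_def by blast
  show False
  proof (cases "lyap_line k p A l \<ge> 0")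
    case True
    then show False using lyap_eq_lyap_line[OF assms l(1)] l(2) by simp
  next
    case False
    then have "lyap_line k p (inv_cocycle A) l \<ge> 0"
      using inv_line_left_inverse(2)[OF l(1) mult(1)] by simp
    then show False
      using lyap_eq_lyap_line[OF assms(1) sl_inv l'(1)] l'(2) \<open>l' = l\<close> by simp
  qed
qed

end
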